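(* For arbitrary inputs of $n$ elements with distinct keys distributed over $p$ processes with $n/p$ elements each, the distributed phase of Janus Quicksort (JQuick), as described in the context, takes $O(\alpha\log^2 p + \beta (n/p)\log p)$ time with probability $1-O(p^{-6})$, and the base cases take $O(\alpha + \beta n/p + (n/p)\log(n/p))$ time.
   Context: Cost model: (symmetric) single-ported message passing: sending a message of $l$ machine words takes time $\alpha + l\beta$, with $\alpha \gg \beta \gg 1$, the unit being the time of a simple machine instruction; a data element occupies one machine word. Broadcast, reduction and prefix sums of vectors of length $l$ over $p$ processes can be done in time $O(\beta l + \alpha\log p)$. Janus Quicksort (JQuick) is a recursive distributed-memory sorting algorithm. The input is $n$ elements with pairwise distinct keys, distributed over $p$ processes numbered $0,\dots,p-1$ with exactly $n/p$ elements per process ($n$ a multiple of $p$); the output is globally sorted with each process holding $n/p$ elements of consecutive ranks. The algorithm maintains tasks; a task is a contiguous range of processes together with a contiguous range of the global sorted order that these processes jointly hold, every process holding exactly $n/p$ elements in total over all tasks it belongs to. A process may belong to two tasks at once (a "janus process"); it then performs the local work of both tasks and executes all communication of both tasks simultaneously with nonblocking operations. The distributed phase consists of distributed recursion levels; one level on a task performs: (1) pivot selection: an element of the task chosen uniformly at random is broadcast to the task's processes; (2) partitioning: each process splits its elements of the task into small elements (smaller than the pivot) and large elements (at least the pivot); (3) data assignment, computed with prefix sums and broadcasts in $O(\alpha\log p)$ time: the small elements are assigned to a left group (an initial segment of the task's processes) and the large elements to a right group (a final segment), so that every process again holds exactly $n/p$ elements in total, the two groups sharing at most one (janus) process, and such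 that each process sends and receives at most a constant number of messages (deterministic message assignment); (4) data exchange according to the assignment. The left group then recursively sorts the small elements and the right group the large ones. A task covering only one or two processes is a base case; after the distributed phase, base cases are sorted: a one-process base case is sorted locally; in a two-process base case each process receives the other's elements, selects via quickselect the elements it must keep according to its load, and sorts them locally. *)

theory Defs
  imports "HOL-Probability.Probability"
begin

text \<open>Elements are identified with their global ranks
  0..n-1 (keys are pairwise distinct), n = p*m with m = n/p. Process i finally holds
  the ranks in its slot [i*m, (i+1)*m). A task is a contiguous rank range [lo,hi);
  its processes are those whose slots intersect the range, and each such process
  holds exactly the ranks of the task lying in its slot.\<close>

definition task_procs :: "nat \<Rightarrow> nat \<Rightarrow> nat \<Rightarrow> nat set" where
  "task_procs m lo hi = (if lo < hi then {lo div m .. (hi - 1) div m} else {})"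

definition nprocs :: "nat \<Rightarrow> nat \<Rightarrow> nat \<Rightarrow> nat" where
  "nprocs m lo hi = card (task_procs m lo hi)"

definition load :: "nat \<Rightarrow> nat \<Rightarrow> nat \<Rightarrow> nat \<Rightarrow> nat" where
  "load m lo hi P = card ({lo..<hi} \<inter> {P*m..<(P+1)*m})"

text \<open>Time of one distributed recursion level on a task with q processes:
  pivot broadcast, prefix sums and broadcasts for the data assignment
  (alpha * log q), plus the data exchange with a constant number of messages
  of at most n/p words per process (alpha + beta * n/p).\<close>
definition level_cost :: "real \<Rightarrow> real \<Rightarrow> nat \<Rightarrow> nat \<Rightarrow> real" where
  "level_cost \<alpha> \<beta> m q = \<alpha> * (1 + log 2 (real q)) + \<beta> * real m"

text \<open>Random execution of the distributed phase on task [lo,hi), with a fuel bound on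
  the recursion depth. Result: None if the fuel ran out, otherwise Some (t, bs) where t
  is the (critical path) time of the distributed phase and bs the list of base cases.\<close>
fun jq :: "nat \<Rightarrow> real \<Rightarrow> real \<Rightarrow> nat \<Rightarrow> nat \<Rightarrow> nat \<Rightarrow> (real \<times> (nat \<times> nat) list) option pmf" where
  "jq 0 \<alpha> \<beta> m lo hi =
     (if hi \<le> lo then return_pmf (Some (0, []))
      else if nprocs m lo hi \<le> 2 then return_pmf (Some (0, [(lo, hi)]))
      else return_pmf None)"
| "jq (Suc f) \<alpha> \<beta> m lo hi =
     (if hi \<le> lo then return_pmf (Some (0, []))
      else if nprocs m lo hi \<le> 2 then return_pmf (Some (0, [(lo, hi)]))
      else do {
        r \<leftarrow> pmf_of_set {lo..<hi};
        L \<leftarrow> jq f \<alpha> \<beta> m lo r;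
        R \<leftarrow> jq f \<alpha> \<beta> m r hi;
        return_pmf (case (L, R) of
            (Some (tL, bl), Some (tR, br)) \<Rightarrow>
              Some (level_cost \<alpha> \<beta> m (nprocs m lo hi) + max tL tR, bl @ br)
          | _ \<Rightarrow> None)
      })"

definition sort_cost :: "nat \<Rightarrow> real" where
  "sort_cost k = real k * log 2 (real k)"

text \<open>Time process P spends on base case [lo,hi): one-process base case: local sort;
  two-process base case: receive the other's elements, select (linear time) the
  elements to keep among all elements of the base case, sort them.\<close>
definition base_cost :: "real \<Rightarrow> real \<Rightarrow> nat \<Rightarrow> nat \<Rightarrow> nat \<times> nat \<Rightarrow> real" where
  "base_cost \<alpha> \<beta> m P b = (case b of (lo, hi) \<Rightarrow>
     (if P \<notin> task_procs m lo hi then 0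
      else if nprocs m lo hi = 1 then sort_cost (load m lo hi P)
      else \<alpha> + \<beta> * real (hi - lo - load m lo hi P) + real (hi - lo)
           + sort_cost (load m lo hi P)))"

text \<open>Total base-case time of process P (a janus process may be in two base cases).\<close>
definition base_time :: "real \<Rightarrow> real \<Rightarrow> nat \<Rightarrow> (nat \<times> nat) list \<Rightarrow> nat \<Rightarrow> real" where
  "base_time \<alpha> \<beta> m bs P = sum_list (map (base_cost \<alpha> \<beta> m P) bs)"

end

theory Submission
  imports Defs
begin

(* The distributed phase takes at most (recursion depth) times the cost of a level with p
   processes. For the depth, give a task of s elements the potential (s/m)^2: a task that still
   recurses has more than two processes, hence more than m elements and potential above 1, while a
   uniformly random pivot splits it into parts j and s - j with E[j^2 + (s - j)^2] <= 3/4 s^2.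
   By a union bound over the two subtasks, the probability that the run from the root (potential p^2) is not finished after k levels is
   at most (3/4)^k p^2, which is below p^-6 for k = 20 ceil(log p).
   The base cases are disjoint rank intervals. Process P sorts at most its m elements, and it takes
   part in the communication of a two-process base case only if that base case contains one of the
   two boundaries P*m, (P+1)*m of its slot, which happens for at most two base cases. *)

lemma measure_pmf_prob_bind:
  "measure_pmf.prob (bind_pmf M N) X = (\<integral>x. measure_pmf.prob (N x) X \<partial>M)"
proof -
  have "emeasure (bind_pmf M N) X = (\<integral>\<^sup>+x. ennreal (measure_pmf.prob (N x) X) \<partial>M)"
    using emeasure_bind_pmf[of M N X]
    by (simp add: measure_pmf.emeasure_eq_measure del: emeasure_bind_pmf)
  also have "\<dots> = ennreal (\<integral>x. measure_pmf.prob (N x) X \<partial>M)"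
    by (rule nn_integral_eq_integral) (auto intro!: measure_pmf.integrable_const_bound[where B=1])
  finally show ?thesis
    by (simp add: measure_pmf.emeasure_eq_measure integral_nonneg_AE)
qed

lemma measure_pmf_prob_bind_pmf_of_set:
  assumes "finite S" "S \<noteq> {}"
  shows "measure_pmf.prob (pmf_of_set S \<bind> N) X = (\<Sum>r\<in>S. measure_pmf.prob (N r) X) / real (card S)"
  using assms by (simp add: measure_pmf_prob_bind integral_pmf_of_set)

lemma measure_pmf_prob_pair_Un_le:
  "measure_pmf.prob (pair_pmf A B) (fst -` X \<union> snd -` Y)
     \<le> measure_pmf.prob A X + measure_pmf.prob B Y"
proof -
  have "measure_pmf.prob (pair_pmf A B) (fst -` X \<union> snd -` Y) \<le>
     measure_pmf.prob (pair_pmf A B) (fst -` X) + measure_pmf.prob (pair_pmf A B) (snd -` Y)"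
    by (rule measure_Un_le) simp_all
  also have "measure_pmf.prob (pair_pmf A B) (fst -` X) = measure_pmf.prob A X"
    using measure_map_pmf[of fst "pair_pmf A B" X] by (simp add: map_fst_pair_pmf)
  also have "measure_pmf.prob (pair_pmf A B) (snd -` Y) = measure_pmf.prob B Y"
    using measure_map_pmf[of snd "pair_pmf A B" Y] by (simp add: map_snd_pair_pmf)
  finally show ?thesis .
qed

lemma sum_of_squares_lessThan:
  "6 * (\<Sum>j<s. real j ^ 2) = real (s - 1) * real s * (2 * real s - 1)"
proof (induction s)
  case 0 then show ?case by simp
next
  case (Suc s) then show ?case by (cases s) (simp_all add: algebra_simps power2_eq_square)
qed

lemma sum_squares_split_le:
  assumes "lo + 2 \<le> hi"
  shows "(\<Sum>r\<in>{lo..<hi}. real (r - lo) ^ 2 + real (hi - r) ^ 2) \<le> 3/4 * real (hi - lo) ^ 3"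
proof -
  define s where "s = hi - lo"
  have s2: "2 \<le> real s" using assms unfolding s_def by simp
  have "(\<Sum>r\<in>{lo..<hi}. real (r - lo) ^ 2 + real (hi - r) ^ 2)
      = (\<Sum>j<s. real j ^ 2 + real (s - j) ^ 2)"
  proof -
    have "{lo..<hi} = (\<lambda>j. j + lo) ` {..<s}"
      unfolding s_def using assms by (simp add: lessThan_atLeast0 image_add_atLeastLessThan)
    then show ?thesis unfolding s_def by (simp add: sum.reindex inj_on_def add.commute)
  qed
  also have "\<dots> = 2 * (\<Sum>j<s. real j ^ 2) + real s ^ 2"
  proof -
    have "(\<Sum>j<s. real (s - j) ^ 2) = (\<Sum>j<s. real (Suc j) ^ 2)"
      by (rule sum.reindex_bij_witness[where i="\<lambda>j. s - Suc j" and j="\<lambda>j. s - Suc j"]) auto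
    also have "\<dots> = (\<Sum>j<s. real j ^ 2) + real s ^ 2"
      by (induction s) simp_all
    finally show ?thesis by (simp add: sum.distrib)
  qed
  also have "\<dots> = (2 * real s ^ 3 + real s) / 3"
    using sum_of_squares_lessThan[of s] s2
    by (simp add: of_nat_diff field_simps power2_eq_square power3_eq_cube)
  also have "\<dots> \<le> 3/4 * real s ^ 3"
  proof -
    have "4 * real s \<le> (real s * real s) * real s"
      using mult_mono[OF s2 s2] by (intro mult_right_mono) simp_all
    then show ?thesis by (simp add: power3_eq_cube)
  qed
  finally show ?thesis unfolding s_def .
qed

lemma nprocs_eq: "lo < hi \<Longrightarrow> nprocs m lo hi = Suc ((hi - 1) div m) - lo div m"
  by (simp add: nprocs_def task_procs_def)

lemma nprocs_gt_2_imp_size_gt: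
  assumes "lo < hi" "0 < m" "2 < nprocs m lo hi"
  shows "lo + m < hi"
proof -
  have "m * (lo div m + 2) \<le> m * ((hi - 1) div m)"
    using assms nprocs_eq[of lo hi m] by (intro mult_le_mono2) simp
  also have "\<dots> \<le> hi - 1" by simp
  finally have "m * (lo div m) + 2 * m \<le> hi - 1" by (simp add: algebra_simps)
  moreover have "lo < m * (lo div m) + m"
    using mult_div_mod_eq[of m lo] mod_less_divisor[OF assms(2), of lo] by linarith
  ultimately show ?thesis by linarith
qed

lemma nprocs_le:
  assumes "lo < hi" "0 < m" "hi \<le> p * m"
  shows "nprocs m lo hi \<le> p"
proof -
  have "(hi - 1) div m < p" using assms by (simp add: div_less_iff_less_mult)
  then show ?thesis using nprocs_eq[OF assms(1), of m] by simp
qed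

lemma level_cost_mono:
  "0 \<le> \<alpha> \<Longrightarrow> 1 \<le> q \<Longrightarrow> q \<le> q' \<Longrightarrow> level_cost \<alpha> \<beta> m q \<le> level_cost \<alpha> \<beta> m q'"
  unfolding level_cost_def by (intro add_right_mono mult_left_mono) simp_all

lemma level_cost_nonneg: "1 \<le> q \<Longrightarrow> 0 \<le> \<alpha> \<Longrightarrow> 0 \<le> \<beta> \<Longrightarrow> 0 \<le> level_cost \<alpha> \<beta> m q"
  unfolding level_cost_def by simp

definition finished_within :: "real \<Rightarrow> (real \<times> (nat \<times> nat) list) option set" where
  "finished_within T = {Some (t, bs) | t bs. t \<le> T}"

definition combine_runs :: "real \<Rightarrow> (real \<times> (nat \<times> nat) list) option
    \<Rightarrow> (real \<times> (nat \<times> nat) list) option \<Rightarrow> (real \<times> (nat \<times> nat) list) option" where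
  "combine_runs c L R = (case (L, R) of
      (Some (tL, bl), Some (tR, br)) \<Rightarrow> Some (c + max tL tR, bl @ br)
    | _ \<Rightarrow> None)"

lemma jq_base_case:
  "hi \<le> lo \<or> nprocs m lo hi \<le> 2 \<Longrightarrow> \<exists>bs. jq f \<alpha> \<beta> m lo hi = return_pmf (Some (0, bs))"
  by (cases f) auto

lemma jq_Suc_recursive:
  "lo < hi \<Longrightarrow> 2 < nprocs m lo hi \<Longrightarrow>
   jq (Suc f) \<alpha> \<beta> m lo hi = pmf_of_set {lo..<hi} \<bind> (\<lambda>r.
     map_pmf (case_prod (combine_runs (level_cost \<alpha> \<beta> m (nprocs m lo hi))))
       (pair_pmf (jq f \<alpha> \<beta> m lo r) (jq f \<alpha> \<beta> m r hi)))"
  by (simp add: pair_pmf_def map_bind_pmf combine_runs_def)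

lemma combine_runs_finished_within:
  "L \<in> finished_within T \<Longrightarrow> R \<in> finished_within T \<Longrightarrow> c \<le> c'
   \<Longrightarrow> combine_runs c L R \<in> finished_within (c' + T)"
  by (auto simp: finished_within_def combine_runs_def)

lemma prob_combine_runs_slow_le:
  assumes "c \<le> c'"
  shows "measure_pmf.prob (map_pmf (case_prod (combine_runs c)) (pair_pmf A B))
           (- finished_within (c' + T))
         \<le> measure_pmf.prob A (- finished_within T) + measure_pmf.prob B (- finished_within T)"
proof -
  have "case_prod (combine_runs c) -` (- finished_within (c' + T))
      \<subseteq> fst -` (- finished_within T) \<union> snd -` (- finished_within T)"
    using combine_runs_finished_within[OF _ _ assms] by auto
  then have "measure_pmf.prob (map_pmf (case_prod (combine_runs c)) (pair_pmf A B))
           (- finished_within (c' + T))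
      \<le> measure_pmf.prob (pair_pmf A B) (fst -` (- finished_within T) \<union> snd -` (- finished_within T))"
    unfolding measure_map_pmf by (rule measure_pmf.finite_measure_mono) simp
  also have "\<dots> \<le> measure_pmf.prob A (- finished_within T) + measure_pmf.prob B (- finished_within T)"
    by (rule measure_pmf_prob_pair_Un_le)
  finally show ?thesis .
qed

lemma prob_jq_base_case_slow:
  "hi \<le> lo \<or> nprocs m lo hi \<le> 2 \<Longrightarrow> 0 \<le> T
   \<Longrightarrow> measure_pmf.prob (jq f \<alpha> \<beta> m lo hi) (- finished_within T) = 0"
  by (drule jq_base_case[of _ _ _ f \<alpha> \<beta>]) (auto simp: finished_within_def)

lemma prob_bind_uniform_pivot_le:
  assumes "lo + 2 \<le> hi" "0 \<le> c"
    and "\<And>r. r \<in> {lo..<hi} \<Longrightarrow> measure_pmf.prob (N r) X \<le> c * (real (r - lo) ^ 2 + real (hi - r) ^ 2)"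
  shows "measure_pmf.prob (pmf_of_set {lo..<hi} \<bind> N) X \<le> 3/4 * c * real (hi - lo) ^ 2"
proof -
  have "measure_pmf.prob (pmf_of_set {lo..<hi} \<bind> N) X
      = (\<Sum>r\<in>{lo..<hi}. measure_pmf.prob (N r) X) / real (hi - lo)"
    using assms(1) by (subst measure_pmf_prob_bind_pmf_of_set) auto
  also have "\<dots> \<le> (\<Sum>r\<in>{lo..<hi}. c * (real (r - lo) ^ 2 + real (hi - r) ^ 2)) / real (hi - lo)"
    by (intro divide_right_mono sum_mono assms(3)) auto
  also have "\<dots> \<le> c * (3/4 * real (hi - lo) ^ 3) / real (hi - lo)"
    unfolding sum_distrib_left[symmetric] using assms(1,2)
    by (intro divide_right_mono mult_left_mono sum_squares_split_le) auto
  also have "\<dots> = 3/4 * c * real (hi - lo) ^ 2"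
    using assms(1) by (simp add: power3_eq_cube power2_eq_square of_nat_diff field_simps)
  finally show ?thesis .
qed

lemma jq_prob_slow_le:
  assumes p: "1 \<le> p" and m: "1 \<le> m" and \<alpha>: "0 \<le> \<alpha>" and \<beta>: "0 \<le> \<beta>"
  shows "k \<le> f \<Longrightarrow> hi \<le> p * m \<Longrightarrow>
    measure_pmf.prob (jq f \<alpha> \<beta> m lo hi) (- finished_within (real k * level_cost \<alpha> \<beta> m p))
      \<le> (3/4) ^ k * (real (hi - lo) / real m) ^ 2"
proof (induction k arbitrary: f lo hi)
  case 0
  show ?case
  proof (cases "hi \<le> lo \<or> nprocs m lo hi \<le> 2")
    case True
    then show ?thesis using prob_jq_base_case_slow level_cost_nonneg[OF p \<alpha> \<beta>] by simp
  next
    case False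
    then have "real m \<le> real (hi - lo)" using nprocs_gt_2_imp_size_gt[of lo hi m] m by simp
    then have "1 \<le> (real (hi - lo) / real m) ^ 2" using m by simp
    then show ?thesis using measure_pmf.prob_le_1 order_trans by auto
  qed
next
  case (Suc k)
  let ?Lc = "level_cost \<alpha> \<beta> m p"
  show ?case
  proof (cases "hi \<le> lo \<or> nprocs m lo hi \<le> 2")
    case True
    then show ?thesis using prob_jq_base_case_slow level_cost_nonneg[OF p \<alpha> \<beta>] by simp
  next
    case False
    then have nontrivial: "lo < hi" "2 < nprocs m lo hi" by auto
    obtain f' where f: "f = Suc f'" and kf: "k \<le> f'" using Suc.prems by (cases f) auto
    have "lo + m < hi" using nprocs_gt_2_imp_size_gt nontrivial m by simp
    then have size: "lo + 2 \<le> hi" using m by simp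
    have cost_le: "level_cost \<alpha> \<beta> m (nprocs m lo hi) \<le> ?Lc"
      using nontrivial Suc.prems m \<alpha> by (intro level_cost_mono nprocs_le) auto
    have "measure_pmf.prob (jq f \<alpha> \<beta> m lo hi) (- finished_within (?Lc + real k * ?Lc))
        \<le> 3/4 * ((3/4) ^ k / real m ^ 2) * real (hi - lo) ^ 2"
      unfolding f jq_Suc_recursive[OF nontrivial]
    proof (rule prob_bind_uniform_pivot_le[OF size])
      fix r assume r: "r \<in> {lo..<hi}"
      let ?run = "map_pmf (case_prod (combine_runs (level_cost \<alpha> \<beta> m (nprocs m lo hi))))
        (pair_pmf (jq f' \<alpha> \<beta> m lo r) (jq f' \<alpha> \<beta> m r hi))"
      have "measure_pmf.prob ?run (- finished_within (?Lc + real k * ?Lc))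
        \<le> measure_pmf.prob (jq f' \<alpha> \<beta> m lo r) (- finished_within (real k * ?Lc))
          + measure_pmf.prob (jq f' \<alpha> \<beta> m r hi) (- finished_within (real k * ?Lc))"
        by (rule prob_combine_runs_slow_le[OF cost_le])
      also have "\<dots> \<le> (3/4) ^ k * (real (r - lo) / real m) ^ 2 + (3/4) ^ k * (real (hi - r) / real m) ^ 2"
        using r Suc.prems by (intro add_mono Suc.IH kf) auto
      finally show "measure_pmf.prob ?run (- finished_within (?Lc + real k * ?Lc))
        \<le> (3/4) ^ k / real m ^ 2 * (real (r - lo) ^ 2 + real (hi - r) ^ 2)"
        by (simp add: power_divide algebra_simps add_divide_distrib)
    qed simp
    then show ?thesis by (simp add: algebra_simps power_divide)
  qed
qed

definition base_cases_ordered :: "nat \<Rightarrow> nat \<Rightarrow> nat \<Rightarrow> (nat \<times> nat) list \<Rightarrow> bool" where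
  "base_cases_ordered m lo hi bs \<longleftrightarrow> sorted_wrt (\<lambda>x y. snd x \<le> fst y) bs
     \<and> (\<forall>(a, b) \<in> set bs. lo \<le> a \<and> a < b \<and> b \<le> hi \<and> nprocs m a b \<le> 2)"

lemma jq_base_cases_ordered:
  "Some (t, bs) \<in> set_pmf (jq f \<alpha> \<beta> m lo hi) \<Longrightarrow> base_cases_ordered m lo hi bs"
proof (induction f arbitrary: lo hi t bs)
  case 0
  then show ?case by (auto simp: base_cases_ordered_def split: if_splits)
next
  case (Suc f)
  show ?case
  proof (cases "hi \<le> lo \<or> nprocs m lo hi \<le> 2")
    case True
    then show ?thesis using Suc.prems by (auto simp: base_cases_ordered_def split: if_splits)
  next
    case False
    then have nontrivial: "lo < hi" "2 < nprocs m lo hi" by auto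
    from Suc.prems[unfolded jq_Suc_recursive[OF nontrivial]] nontrivial obtain r L R where
      r: "lo \<le> r" "r < hi" and L: "L \<in> set_pmf (jq f \<alpha> \<beta> m lo r)"
      and R: "R \<in> set_pmf (jq f \<alpha> \<beta> m r hi)"
      and LR: "combine_runs (level_cost \<alpha> \<beta> m (nprocs m lo hi)) L R = Some (t, bs)"
      by (auto simp: set_pair_pmf)
    from LR obtain tL bl tR br where "L = Some (tL, bl)" "R = Some (tR, br)" and bs: "bs = bl @ br"
      by (auto simp: combine_runs_def split: option.splits)
    with Suc.IH L R have "base_cases_ordered m lo r bl" "base_cases_ordered m r hi br"
      by blast+
    then show ?thesis using r unfolding bs base_cases_ordered_def
      by (fastforce simp: sorted_wrt_append)
  qed
qed

lemma sum_list_card_Int_intervals: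
  fixes bs :: "(nat \<times> nat) list"
  assumes "sorted_wrt (\<lambda>x y. snd x \<le> fst y) bs" "finite S"
  shows "(\<Sum>(a, b) \<leftarrow> bs. card ({a..<b} \<inter> S)) = card ((\<Union>(a, b) \<in> set bs. {a..<b}) \<inter> S)"
  using assms(1)
proof (induction bs)
  case Nil
  then show ?case by simp
next
  case (Cons x bs)
  obtain a b where x: "x = (a, b)" by fastforce
  have "b \<le> c" if "(c, d) \<in> set bs" for c d
    using Cons.prems x that by fastforce
  then have "{a..<b} \<inter> (\<Union>(c, d) \<in> set bs. {c..<d}) = {}"
    by (fastforce simp: disjoint_iff split: prod.splits)
  then have "card (({a..<b} \<union> (\<Union>(c, d) \<in> set bs. {c..<d})) \<inter> S)
      = card ({a..<b} \<inter> S) + card ((\<Union>(c, d) \<in> set bs. {c..<d}) \<inter> S)"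
    using assms(2) by (subst card_Un_disjoint[symmetric]) (auto simp: Int_Un_distrib2)
  then show ?case using Cons x by simp
qed

lemma sum_list_card_Int_intervals_le:
  fixes bs :: "(nat \<times> nat) list"
  assumes "sorted_wrt (\<lambda>x y. snd x \<le> fst y) bs" "finite S"
  shows "(\<Sum>(a, b) \<leftarrow> bs. card ({a..<b} \<inter> S)) \<le> card S"
  unfolding sum_list_card_Int_intervals[OF assms] using assms(2) by (simp add: card_mono)

lemma load_le: "load m lo hi P \<le> m"
  unfolding load_def using card_mono[of "{P*m..<(P+1)*m}" "{lo..<hi} \<inter> {P*m..<(P+1)*m}"] by simp

lemma sort_cost_le: "l \<le> m \<Longrightarrow> sort_cost l \<le> real l * log 2 (real m)"
  unfolding sort_cost_def by (cases "l = 0") (auto intro!: mult_left_mono)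

lemma two_process_task:
  assumes "a < b" "0 < m" "nprocs m a b = 2" "P \<in> task_procs m a b"
  shows "b - a \<le> 2 * m" and "{a..<b} \<inter> {P * m, (P + 1) * m} \<noteq> {}"
proof -
  define q where "q = a div m"
  have last: "(b - 1) div m = q + 1" using assms nprocs_eq[of a b m] unfolding q_def by simp
  then have upper: "(q + 1) * m \<le> b - 1" "b - 1 < (q + 2) * m"
    using div_times_less_eq_dividend[of "b - 1" m] dividend_less_div_times[OF assms(2), of "b - 1"]
    by simp_all
  have lower: "q * m \<le> a" "a < (q + 1) * m"
    unfolding q_def using dividend_less_div_times[OF assms(2), of a] by simp_all
  from upper lower show "b - a \<le> 2 * m" by (simp add: algebra_simps)
  from upper lower have boundary: "(q + 1) * m \<in> {a..<b}" by simp
  have "P = q \<or> P = q + 1" using assms(1,4) last unfolding task_procs_def q_def by auto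
  then show "{a..<b} \<inter> {P * m, (P + 1) * m} \<noteq> {}" using boundary by auto
qed

lemma base_cost_le:
  assumes ab: "a < b" and two: "nprocs m a b \<le> 2" and m: "0 < m" and \<alpha>: "0 \<le> \<alpha>" and \<beta>: "0 \<le> \<beta>"
  shows "base_cost \<alpha> \<beta> m P (a, b) \<le> real (load m a b P) * log 2 (real m)
     + (\<alpha> + 2 * \<beta> * real m + 2 * real m) * real (card ({a..<b} \<inter> {P * m, (P + 1) * m}))"
proof -
  let ?K = "\<alpha> + 2 * \<beta> * real m + 2 * real m"
  let ?l = "load m a b P"
  have sort: "sort_cost ?l \<le> real ?l * log 2 (real m)" by (rule sort_cost_le[OF load_le])
  have K_nonneg: "0 \<le> ?K" using \<alpha> \<beta> by simp
  then have rest_nonneg: "0 \<le> ?K * real (card ({a..<b} \<inter> {P * m, (P + 1) * m}))"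
    by simp
  have "a div m \<le> (b - 1) div m" using ab by (intro div_le_mono) simp
  then have "1 \<le> nprocs m a b" using nprocs_eq[OF ab, of m] by simp
  then consider "P \<notin> task_procs m a b" | "nprocs m a b = 1"
    | "P \<in> task_procs m a b" "nprocs m a b = 2"
    using two by linarith
  then show ?thesis
  proof cases
    case 1
    then show ?thesis using rest_nonneg m by (simp add: base_cost_def)
  next
    case 2
    then show ?thesis using rest_nonneg sort m by (simp add: base_cost_def)
  next
    case 3
    note pair = two_process_task[OF ab m 3(2,1)]
    have "1 \<le> real (card ({a..<b} \<inter> {P * m, (P + 1) * m}))"
      using pair(2) by (simp add: Suc_le_eq card_gt_0_iff)
    then have "?K \<le> ?K * real (card ({a..<b} \<inter> {P * m, (P + 1) * m}))"
      using mult_left_mono[OF _ K_nonneg] by (metis mult.right_neutral)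
    moreover have "\<beta> * real (b - a - ?l) \<le> \<beta> * (2 * real m)"
      using pair(1) \<beta> by (intro mult_left_mono) linarith+
    moreover have "real (b - a) \<le> 2 * real m" using pair(1) by linarith
    ultimately show ?thesis using 3 sort by (simp add: base_cost_def)
  qed
qed

lemma base_time_le:
  assumes ordered: "base_cases_ordered m lo hi bs"
    and m: "1 \<le> m" and \<alpha>: "0 \<le> \<alpha>" and \<beta>: "1 \<le> \<beta>"
  shows "base_time \<alpha> \<beta> m bs P \<le> 8 * (\<alpha> + \<beta> * real m + real m * log 2 (real m))"
proof -
  let ?K = "\<alpha> + 2 * \<beta> * real m + 2 * real m"
  let ?L = "log 2 (real m)"
  let ?boundary = "{P * m, (P + 1) * m}"
  have sorted: "sorted_wrt (\<lambda>x y. snd x \<le> fst y) bs"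
    and cases: "\<And>a b. (a, b) \<in> set bs \<Longrightarrow> a < b \<and> nprocs m a b \<le> 2"
    using ordered unfolding base_cases_ordered_def by auto
  have "base_time \<alpha> \<beta> m bs P
      \<le> (\<Sum>(a, b) \<leftarrow> bs. real (load m a b P) * ?L + ?K * real (card ({a..<b} \<inter> ?boundary)))"
    unfolding base_time_def
    by (intro sum_list_mono, clarify, rule base_cost_le) (use cases m \<alpha> \<beta> in auto)
  also have "\<dots> = ?L * real (\<Sum>(a, b) \<leftarrow> bs. load m a b P)
      + ?K * real (\<Sum>(a, b) \<leftarrow> bs. card ({a..<b} \<inter> ?boundary))"
    by (induction bs) (auto simp: algebra_simps)
  also have "\<dots> \<le> ?L * real m + ?K * 2"
  proof (intro add_mono mult_left_mono)
    show "real (\<Sum>(a, b) \<leftarrow> bs. load m a b P) \<le> real m"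
      using sum_list_card_Int_intervals_le[OF sorted, of "{P * m..<(P + 1) * m}"]
      unfolding load_def by simp
    show "real (\<Sum>(a, b) \<leftarrow> bs. card ({a..<b} \<inter> ?boundary)) \<le> 2"
      using order_trans[OF sum_list_card_Int_intervals_le[OF sorted] card_insert_le_m1[of 2]]
      by simp
  qed (use m \<alpha> \<beta> in simp_all)
  also have "\<dots> \<le> 8 * (\<alpha> + \<beta> * real m + real m * log 2 (real m))"
  proof -
    have "real m \<le> \<beta> * real m" "0 \<le> real m * ?L" using m \<beta> by simp_all
    then show ?thesis using \<alpha> by (simp add: algebra_simps)
  qed
  finally show ?thesis .
qed

lemma finished_within_mono: "T \<le> T' \<Longrightarrow> finished_within T \<subseteq> finished_within T'"
  by (auto simp: finished_within_def)

lemma depth_times_level_cost_le: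
  assumes p: "2 \<le> p" and \<alpha>: "0 \<le> \<alpha>" and \<beta>: "0 \<le> \<beta>"
    and c: "real c \<le> log 2 (real p) + 1"
  shows "real (20 * c) * level_cost \<alpha> \<beta> m p
     \<le> 80 * (\<alpha> * (log 2 (real p))\<^sup>2 + \<beta> * real m * log 2 (real p))"
proof -
  define L where "L = log 2 (real p)"
  have L1: "1 \<le> L" unfolding L_def using p by simp
  have bm: "0 \<le> \<beta> * real m" using \<beta> by simp
  have "level_cost \<alpha> \<beta> m p \<le> 2 * \<alpha> * L + \<beta> * real m"
    unfolding level_cost_def L_def[symmetric] using mult_left_mono[OF L1 \<alpha>] by (simp add: algebra_simps)
  moreover have "0 \<le> level_cost \<alpha> \<beta> m p" unfolding level_cost_def L_def[symmetric]
    using \<alpha> bm L1 by simp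
  moreover have "real (20 * c) \<le> 40 * L" using c L1 unfolding L_def by simp
  ultimately have "real (20 * c) * level_cost \<alpha> \<beta> m p \<le> (40 * L) * (2 * \<alpha> * L + \<beta> * real m)"
    by (intro mult_mono) simp_all
  also have "\<dots> \<le> 80 * (\<alpha> * L\<^sup>2 + \<beta> * real m * L)"
    using bm L1 by (simp add: algebra_simps power2_eq_square)
  finally show ?thesis unfolding L_def .
qed

lemma three_quarters_power_le:
  assumes p: "2 \<le> p" and c: "real p \<le> 2 ^ c"
  shows "(3/4::real) ^ (20 * c) * real p ^ 2 \<le> 1 / real p ^ 6"
proof -
  have "real p ^ 8 \<le> (2 ^ c) ^ 8" using c by (intro power_mono) simp_all
  also have "\<dots> = (2 ^ 8) ^ c" by (metis power_mult mult.commute)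
  finally have "(3/4::real) ^ (20 * c) * real p ^ 8 \<le> ((3/4) ^ 20) ^ c * (2 ^ 8) ^ c"
    by (simp add: power_mult mult_left_mono)
  also have "\<dots> = ((3/4) ^ 20 * 2 ^ 8) ^ c" by (simp add: power_mult_distrib)
  also have "\<dots> \<le> 1" by (rule power_le_one) (simp_all add: power_divide)
  finally have "(3/4::real) ^ (20 * c) * real p ^ 2 * real p ^ 6 \<le> 1"
    by (simp add: mult.assoc flip: power_add)
  then show ?thesis using p by (simp add: field_simps)
qed

lemma jq_distributed_phase_fast:
  assumes p: "2 \<le> p" and m: "1 \<le> m" and \<alpha>: "0 \<le> \<alpha>" and \<beta>: "0 \<le> \<beta>"
    and fuel: "20 * nat \<lceil>log 2 (real p)\<rceil> \<le> fuel"
  shows "1 - 1 / real p ^ 6 \<le> measure_pmf.prob (jq fuel \<alpha> \<beta> m 0 (p * m))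
           (finished_within (80 * (\<alpha> * (log 2 (real p))\<^sup>2 + \<beta> * real m * log 2 (real p))))"
proof -
  define c where "c = nat \<lceil>log 2 (real p)\<rceil>"
  have "real c = \<lceil>log 2 (real p)\<rceil>" unfolding c_def using p by simp
  then have c_le: "real c \<le> log 2 (real p) + 1" and c_ge: "log 2 (real p) \<le> real c"
    by linarith+
  have "real p = 2 powr log 2 (real p)" using p by simp
  also have "\<dots> \<le> 2 ^ c" using c_ge by (simp add: powr_realpow[symmetric])
  finally have p_le: "real p \<le> 2 ^ c" .
  let ?M = "jq fuel \<alpha> \<beta> m 0 (p * m)"
  let ?fast = "finished_within (real (20 * c) * level_cost \<alpha> \<beta> m p)"
  have "measure_pmf.prob ?M (- ?fast) \<le> (3/4) ^ (20 * c) * (real (p * m - 0) / real m) ^ 2"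
    using p m \<alpha> \<beta> fuel unfolding c_def by (intro jq_prob_slow_le) simp_all
  also have "\<dots> \<le> 1 / real p ^ 6" using m three_quarters_power_le[OF p p_le] by simp
  finally have "1 - 1 / real p ^ 6 \<le> measure_pmf.prob ?M ?fast"
    using measure_pmf.prob_compl[of ?fast ?M] by (simp add: Compl_eq_Diff_UNIV)
  also have "\<dots> \<le> measure_pmf.prob ?M
      (finished_within (80 * (\<alpha> * (log 2 (real p))\<^sup>2 + \<beta> * real m * log 2 (real p))))"
    using depth_times_level_cost_le[OF p \<alpha> \<beta> c_le]
    by (intro measure_pmf.finite_measure_mono finished_within_mono) simp_all
  finally show ?thesis .
qed

lemma jq_distributed_phase_eventually_fast:
  assumes p: "1 \<le> p" and m: "1 \<le> m" and \<alpha>: "0 \<le> \<alpha>" and \<beta>: "0 \<le> \<beta>"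
  shows "\<forall>\<^sub>F fuel in sequentially. 1 - 1 / real p ^ 6 \<le> measure_pmf.prob (jq fuel \<alpha> \<beta> m 0 (p * m))
           (finished_within (80 * (\<alpha> * (log 2 (real p))\<^sup>2 + \<beta> * real m * log 2 (real p))))"
proof (cases "p = 1")
  case True
  then show ?thesis by simp
next
  case False
  with p have "2 \<le> p" by simp
  then show ?thesis unfolding eventually_sequentially
    by (intro exI allI impI jq_distributed_phase_fast m \<alpha> \<beta>)
qed

theorem theorem1:
  shows "\<exists>C>0. \<forall>(p::nat) (m::nat) (\<alpha>::real) (\<beta>::real).
    1 \<le> p \<and> 1 \<le> m \<and> 1 \<le> \<beta> \<and> \<beta> \<le> \<alpha> \<longrightarrow>
      (\<forall>\<^sub>F fuel in sequentially.
         measure_pmf.prob (jq fuel \<alpha> \<beta> m 0 (p * m))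
           {Some (t, bs) | t bs. t \<le> C * (\<alpha> * (log 2 (real p))\<^sup>2 + \<beta> * real m * log 2 (real p))}
         \<ge> 1 - C / real p ^ 6)
    \<and> (\<forall>fuel t bs. Some (t, bs) \<in> set_pmf (jq fuel \<alpha> \<beta> m 0 (p * m)) \<longrightarrow>
         (\<forall>P<p. base_time \<alpha> \<beta> m bs P \<le> C * (\<alpha> + \<beta> * real m + real m * log 2 (real m))))"
proof (intro exI[where x=80] conjI allI impI)
  fix p m :: nat and \<alpha> \<beta> :: real
  assume "1 \<le> p \<and> 1 \<le> m \<and> 1 \<le> \<beta> \<and> \<beta> \<le> \<alpha>"
  then have "\<forall>\<^sub>F fuel in sequentially. 1 - 1 / real p ^ 6 \<le> measure_pmf.prob (jq fuel \<alpha> \<beta> m 0 (p * m))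
      (finished_within (80 * (\<alpha> * (log 2 (real p))\<^sup>2 + \<beta> * real m * log 2 (real p))))"
    by (intro jq_distributed_phase_eventually_fast) auto
  moreover have "1 - 80 / real p ^ 6 \<le> 1 - 1 / real p ^ 6" by (simp add: divide_right_mono)
  ultimately show "\<forall>\<^sub>F fuel in sequentially. 1 - 80 / real p ^ 6 \<le> measure_pmf.prob (jq fuel \<alpha> \<beta> m 0 (p * m))
      {Some (t, bs) | t bs. t \<le> 80 * (\<alpha> * (log 2 (real p))\<^sup>2 + \<beta> * real m * log 2 (real p))}"
    unfolding finished_within_def by (elim eventually_mono) linarith
next
  fix p m :: nat and \<alpha> \<beta> :: real and fuel t bs P
  assume params: "1 \<le> p \<and> 1 \<le> m \<and> 1 \<le> \<beta> \<and> \<beta> \<le> \<alpha>"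
    and run: "Some (t, bs) \<in> set_pmf (jq fuel \<alpha> \<beta> m 0 (p * m))"
  have "base_time \<alpha> \<beta> m bs P \<le> 8 * (\<alpha> + \<beta> * real m + real m * log 2 (real m))"
    using params by (intro base_time_le[OF jq_base_cases_ordered[OF run]]) auto
  also have "\<dots> \<le> 80 * (\<alpha> + \<beta> * real m + real m * log 2 (real m))"
    using params by simp
  finally show "base_time \<alpha> \<beta> m bs P \<le> 80 * (\<alpha> + \<beta> * real m + real m * log 2 (real m))" .
qed simp

end
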